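(* Let $0<d<\pi/2$, $\mathscr{D}_d=\{\zeta\in\mathbb{C}:|\Im\zeta|<d\}$, $\mathscr{D}_d^{-}=\{\zeta\in\mathscr{D}_d:\Re\zeta<0\}$, $\mathscr{D}_d^{+}=\{\zeta\in\mathscr{D}_d:\Re\zeta\ge0\}$, and $\psi(t)=\sinh[(\pi/2)\sinh t]$. Assume $f$ is analytic on $\psi(\mathscr{D}_d)$ and there are constants $K,\alpha,\beta>0$ with $|f(z)|\le K|1+z^2|^{-(\alpha+1)/2}$ for $z\in\psi(\mathscr{D}_d^-)$ and $|f(z)|\le K|1+z^2|^{-(\beta+1)/2}$ for $z\in\psi(\mathscr{D}_d^+)$. Let $\mu=\min\{\alpha,\beta\}$, $\nu=\max\{\alpha,\beta\}$. Then $F(\zeta)=f(\psi(\zeta))\psi'(\zeta)$ belongs to $\mathbf{L}^{\mathrm{DE}}_{L,R,\alpha,\beta}(\mathscr{D}_d)$ with $L=2^{\nu}K/\{\cos(\frac\pi2\sin d)\}^{(\nu-\mu)/2}$ and $R=2^{\nu}K$.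
   Context: For positive $L,R,\alpha,\beta$ and $0<d<\pi/2$, $\mathbf{L}^{\mathrm{DE}}_{L,R,\alpha,\beta}(\mathscr{D}_d)$ is the set of functions $F$ analytic on $\mathscr{D}_d$ such that for all $\zeta\in\mathscr{D}_d$, $|F(\zeta)|\le\frac{(\pi/2)L|\cosh\zeta|}{|1+e^{-\pi\sinh\zeta}|^{\alpha/2}|1+e^{\pi\sinh\zeta}|^{\beta/2}}$, and for all $x\in\mathbb{R}$, $|F(x)|\le\frac{(\pi/2)R\cosh x}{(1+e^{-\pi\sinh x})^{\alpha/2}(1+e^{\pi\sinh x})^{\beta/2}}$. *)

theory Defs
  imports "HOL-Complex_Analysis.Complex_Analysis"
begin

definition strip :: "real \<Rightarrow> complex set" where
  "strip d = {z. \<bar>Im z\<bar> < d}"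

definition strip_minus :: "real \<Rightarrow> complex set" where
  "strip_minus d = {z \<in> strip d. Re z < 0}"

definition strip_plus :: "real \<Rightarrow> complex set" where
  "strip_plus d = {z \<in> strip d. Re z \<ge> 0}"

definition psi_DE :: "complex \<Rightarrow> complex" where
  "psi_DE t = sinh (complex_of_real (pi/2) * sinh t)"

definition LDE_class :: "real \<Rightarrow> real \<Rightarrow> real \<Rightarrow> real \<Rightarrow> real \<Rightarrow> (complex \<Rightarrow> complex) set" where
  "LDE_class L R \<alpha> \<beta> d = {F. F analytic_on strip d \<and>
     (\<forall>\<zeta>\<in>strip d. norm (F \<zeta>) \<le>
        (pi/2) * L * norm (cosh \<zeta>) /
        (norm (1 + exp (- complex_of_real pi * sinh \<zeta>)) powr (\<alpha>/2) *
         norm (1 + exp (complex_of_real pi * sinh \<zeta>)) powr (\<beta>/2))) \<and>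
     (\<forall>x::real. norm (F (complex_of_real x)) \<le>
        (pi/2) * R * cosh x /
        ((1 + exp (- pi * sinh x)) powr (\<alpha>/2) * (1 + exp (pi * sinh x)) powr (\<beta>/2)))}"

end

theory Submission
  imports Defs
begin

text \<open>
  Put \<open>W = (\<pi>/2) sinh \<zeta>\<close>, so that \<open>\<psi> \<zeta> = sinh W\<close>, \<open>1 + (\<psi> \<zeta>)^2 = (cosh W)^2\<close>
  and \<open>\<psi>' \<zeta> = (\<pi>/2) cosh \<zeta> cosh W\<close>. The two weights
  \<open>P = |1 + exp (-\<pi> sinh \<zeta>)|\<close> and \<open>Q = |1 + exp (\<pi> sinh \<zeta>)|\<close> satisfy
  \<open>P Q = 4 |cosh W|^2\<close>, so on the left half-strip the hypothesis on \<open>f\<close> gives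
  \<open>|F \<zeta>| P^(\<alpha>/2) Q^(\<beta>/2) \<le> (\<pi>/2) |cosh \<zeta>| K 2^\<alpha> Q^((\<beta>-\<alpha>)/2)\<close>, and symmetrically on
  the right half-strip. There \<open>Q \<le> 2\<close> (resp. \<open>P \<le> 2\<close>), and on the strip both weights are
  at least \<open>cos ((\<pi>/2) sin d)\<close> (at least 1 on the real axis); this bounds the remaining
  power whatever the sign of \<open>\<beta> - \<alpha>\<close>.

  The lower bound comes from \<open>|1 + exp (a + i b)|^2 = 4 exp a ((cosh (a/2))^2 - (sin (b/2))^2)\<close>:
  for \<open>a + i b = \<pi> sinh \<zeta>\<close> and \<open>t = |sin (Im \<zeta>)|\<close> it reduces to the real inequality
  \<open>|sin (t q)| \<le> sin (\<pi> t/2) cosh R\<close> with \<open>q \<ge> \<pi>/2\<close> and \<open>R^2 = (1 - t^2)(q^2 - \<pi>^2/4)\<close>,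
  which follows from Jordan's inequality and the quadratic bounds on \<open>cos\<close> and \<open>cosh\<close>.
\<close>

section \<open>Elementary inequalities for sin, cos and cosh\<close>

lemma cos_ge_one_minus_square_half: "1 - x^2 / 2 \<le> cos (x::real)"
proof -
  have "sin (x/2)^2 \<le> (x/2)^2"
    using abs_sin_x_le_abs_x[of "x/2"] by (metis abs_ge_zero power2_abs power_mono)
  then show ?thesis
    using cos_double_sin[of "x/2"] by (simp add: power_divide)
qed

lemma cosh_ge_one_plus_square_half: "1 + x^2 / 2 \<le> cosh (x::real)"
proof -
  let ?f = "\<lambda>n. if even n then x ^ n /\<^sub>R fact n else 0"
  have sums: "?f sums cosh x" by (rule cosh_converges)
  have "sum ?f {..<3} \<le> suminf ?f"
    by (rule sum_le_suminf) (use sums in \<open>auto simp: sums_iff\<close>)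
  moreover have "sum ?f {..<3} = 1 + x^2 / 2" by (simp add: eval_nat_numeral)
  ultimately show ?thesis using sums by (simp add: sums_iff)
qed

lemma concave_on_sin: "concave_on {0..pi} sin"
  by (rule f''_le0_imp_concave[where f' = cos and f'' = "\<lambda>x. - sin x"])
     (auto intro!: derivative_eq_intros sin_ge_zero)

lemma jordan_inequality:
  assumes "0 \<le> t" "t \<le> 1"
  shows "t \<le> sin (pi/2 * t)"
  using concave_onD[OF concave_on_sin, of t 0 "pi/2"] assms by (simp add: mult.commute)

lemma sin_le_sin_mul_one_plus_square_half:
  fixes t q R :: real
  assumes t: "0 \<le> t" "t \<le> 1" and q: "pi/2 \<le> q" and R: "R^2 = (1 - t^2) * (q^2 - pi^2/4)"
  shows "sin (t * q) \<le> sin (pi/2 * t) * (1 + R^2/2)"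
proof -
  define S where "S = sin (pi/2 * t)"
  define C where "C = cos (pi/2 * t)"
  define \<delta> where "\<delta> = t * (q - pi/2)"
  define D where "D = q^2 - pi^2/4"
  have \<delta>: "0 \<le> \<delta>" unfolding \<delta>_def using t q by simp
  have D: "0 \<le> D" "\<delta> * pi \<le> t * D"
  proof -
    have "(q - pi/2) * pi \<le> (q - pi/2) * (q + pi/2)" using q by (intro mult_left_mono) auto
    moreover have "D = (q - pi/2) * (q + pi/2)" unfolding D_def by (simp add: algebra_simps power2_eq_square)
    moreover have "0 \<le> (q - pi/2) * pi" using q by simp
    ultimately show "0 \<le> D" "\<delta> * pi \<le> t * D"
      unfolding \<delta>_def using t by (auto simp: mult.assoc intro: mult_left_mono)
  qed
  have S: "t \<le> S" unfolding S_def using jordan_inequality t .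
  have C: "0 \<le> C" "C \<le> pi/2 * (1 - t)"
  proof -
    have "C = sin (pi/2 * (1 - t))" unfolding C_def by (simp add: sin_diff right_diff_distrib)
    then show "0 \<le> C" "C \<le> pi/2 * (1 - t)"
      using t sin_x_le_x[of "pi/2 * (1 - t)"] by (auto intro!: sin_ge_zero)
  qed
  have "C * \<delta> * pi \<le> pi/2 * (1 - t) * (t * D)"
    using mult_mono[OF C(2) D(2)] \<delta> t by (simp add: mult.assoc)
  also have "\<dots> \<le> pi/2 * (1 - t) * ((1 + t) * S * D)"
  proof -
    have "t \<le> (1 + t) * S" using S t mult_right_mono[of 1 "1 + t" S] by simp
    then show ?thesis using t D by (intro mult_left_mono mult_right_mono) auto
  qed
  also have "\<dots> = pi * (S * ((1 - t^2) * D) / 2)" by (simp add: power2_eq_square algebra_simps)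
  also have "\<dots> = pi * (S * R^2 / 2)" unfolding R D_def ..
  finally have CR: "C * \<delta> \<le> S * R^2/2" by simp
  have "t * q = pi/2 * t + \<delta>" unfolding \<delta>_def by (simp add: algebra_simps)
  then have "sin (t * q) = S * cos \<delta> + C * sin \<delta>" unfolding S_def C_def by (simp add: sin_add)
  also have "\<dots> \<le> S + C * \<delta>"
    using S t C sin_x_le_x[OF \<delta>] cos_le_one[of \<delta>]
    by (intro add_mono mult_left_mono) (auto intro: mult_left_le)
  finally show ?thesis using CR unfolding S_def by (simp add: algebra_simps)
qed

lemma one_le_sin_mul_cosh:
  fixes t R :: real
  assumes t: "0 < t" "t < 1" and R: "pi^2/4 * (1 - t^2)^2 \<le> R^2 * t^2"
  shows "1 \<le> sin (pi/2 * t) * cosh R"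
proof (cases "t \<le> 1/2")
  case True
  have "(3/4)^2 \<le> (1 - t^2)^2"
  proof (rule power_mono)
    have "t^2 \<le> (1/2)^2" using True t by (intro power_mono) auto
    then show "3/4 \<le> 1 - t^2" by (simp add: power_divide)
  qed simp
  moreover have "3^2 \<le> pi^2" using pi_gt3 by (intro power_mono) auto
  ultimately have "9/4 * (3/4)^2 \<le> pi^2/4 * (1 - t^2)^2" by (intro mult_mono) auto
  then have "81/64 \<le> t * (t * R^2)" using R by (simp add: power2_eq_square algebra_simps)
  also have "\<dots> \<le> 1/2 * (t * R^2)" using True t by (intro mult_right_mono) auto
  finally have "1 \<le> t * (1 + R^2/2)" using t by (simp add: algebra_simps)
  also have "\<dots> \<le> sin (pi/2 * t) * cosh R"
    using jordan_inequality[of t] cosh_ge_one_plus_square_half[of R] t by (intro mult_mono) auto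
  finally show ?thesis .
next
  case False
  define a where "a = pi^2 * (1 - t)^2"
  have a: "0 \<le> a" "a \<le> 4"
  proof -
    have "pi^2 \<le> 4^2" using pi_less_4 by (intro power_mono) auto
    moreover have "(1 - t)^2 \<le> (1/2)^2" using False t by (intro power_mono) auto
    ultimately show "0 \<le> a" "a \<le> 4" unfolding a_def using mult_mono[of "pi^2" 16 "(1 - t)^2" "1/4"]
      by (auto simp: power_divide)
  qed
  have "a * t^2 = pi^2/4 * (2 * (1 - t) * t)^2"
    unfolding a_def power_mult_distrib by (simp add: power2_eq_square)
  also have "\<dots> \<le> pi^2/4 * (1 - t^2)^2"
  proof (intro mult_left_mono power_mono)
    show "2 * (1 - t) * t \<le> 1 - t^2" using zero_le_power2[of "1 - t"] by (simp add: power2_eq_square algebra_simps)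
  qed (use t in auto)
  also note R
  finally have "a * t^2 \<le> R^2 * t^2" .
  then have cosh: "1 + a/2 \<le> cosh R" using cosh_ge_one_plus_square_half[of R] t by simp
  have sin: "1 - a/8 \<le> sin (pi/2 * t)"
  proof -
    have "sin (pi/2 * t) = cos (pi/2 * (1 - t))" by (simp add: cos_diff right_diff_distrib)
    then show ?thesis
      using cos_ge_one_minus_square_half[of "pi/2 * (1 - t)"] unfolding a_def
      by (simp add: power_mult_distrib power_divide)
  qed
  have "1 \<le> (1 - a/8) * (1 + a/2)"
    using a mult_nonneg_nonneg[of a "3/8 - a/16"] by (simp add: algebra_simps)
  also have "\<dots> \<le> sin (pi/2 * t) * cosh R"
    using sin cosh a by (intro mult_mono) auto
  finally show ?thesis .
qed

lemma abs_sin_le_sin_mul_cosh: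
  fixes t q R :: real
  assumes t: "0 \<le> t" "t < 1" and q: "pi/2 \<le> q" and R: "R^2 = (1 - t^2) * (q^2 - pi^2/4)"
  shows "\<bar>sin (t * q)\<bar> \<le> sin (pi/2 * t) * cosh R"
proof (cases "t * q \<le> pi/2")
  case True
  have "0 \<le> t * q" using t q pi_gt_zero by (intro mult_nonneg_nonneg) linarith+
  then have "0 \<le> sin (t * q)" using True pi_gt_zero by (intro sin_ge_zero) auto
  moreover have "sin (t * q) \<le> sin (pi/2 * t) * (1 + R^2/2)"
    using sin_le_sin_mul_one_plus_square_half t q R by simp
  moreover have "sin (pi/2 * t) * (1 + R^2/2) \<le> sin (pi/2 * t) * cosh R"
    using t cosh_ge_one_plus_square_half[of R] by (intro mult_left_mono sin_ge_zero) auto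
  ultimately show ?thesis by simp
next
  case False
  then have "0 < t" using t pi_gt_zero by (cases "t = 0") auto
  have "pi^2/4 \<le> (t * q)^2"
    using False pi_gt_zero power_mono[of "pi/2" "t * q" 2] by (simp add: power_divide)
  then have "pi^2/4 * (1 - t^2) \<le> (q^2 - pi^2/4) * t^2"
    by (simp add: power_mult_distrib algebra_simps add_divide_distrib diff_divide_distrib)
  then have "(1 - t^2) * (pi^2/4 * (1 - t^2)) \<le> (1 - t^2) * ((q^2 - pi^2/4) * t^2)"
    using t by (intro mult_left_mono) (auto simp: abs_square_le_1)
  then have "pi^2/4 * (1 - t^2)^2 \<le> R^2 * t^2"
    unfolding R by (simp add: power2_eq_square mult_ac)
  then have "1 \<le> sin (pi/2 * t) * cosh R" using one_le_sin_mul_cosh \<open>0 < t\<close> t by simp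
  then show ?thesis using abs_sin_le_one[of "t * q"] by linarith
qed

section \<open>The weights |1 + exp (\<plusminus>\<pi> sinh \<zeta>)|\<close>

lemma Re_sinh: "Re (sinh z) = sinh (Re z) * cos (Im z)"
  by (simp add: sinh_field_def Re_exp Im_exp field_simps)

lemma Im_sinh: "Im (sinh z) = cosh (Re z) * sin (Im z)"
  by (simp add: sinh_field_def cosh_field_def Re_exp Im_exp field_simps)

lemma norm_one_plus_exp_squared:
  "norm (1 + exp w)^2 = 4 * exp (Re w) * (cosh (Re w / 2)^2 - sin (Im w / 2)^2)"
proof -
  define a b where "a = Re w" and "b = Im w"
  have "norm (1 + exp w)^2 = (1 + exp a * cos b)^2 + (exp a * sin b)^2"
    unfolding a_def b_def by (simp add: cmod_power2 Re_exp Im_exp)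
  also have "\<dots> = 1 + 2 * exp a * cos b + exp a^2"
  proof -
    have "(exp a * cos b)^2 + (exp a * sin b)^2 = exp a^2"
      by (simp add: power_mult_distrib flip: distrib_left)
    then show ?thesis by (simp add: power2_eq_square algebra_simps)
  qed
  also have "\<dots> = 4 * exp a * ((exp (a/2) + exp (- (a/2)))^2 / 4 - sin (b/2)^2)"
  proof -
    define E where "E = exp (a/2)"
    have E: "0 < E" "exp a = E^2" "exp (- (a/2)) = 1 / E"
      unfolding E_def by (simp_all add: exp_double[symmetric] exp_minus inverse_eq_divide)
    have cos: "cos b = 1 - 2 * sin (b/2)^2" using cos_double_sin[of "b/2"] by simp
    show ?thesis unfolding E(2,3) E_def[symmetric] cos using E(1)
      by (simp add: power2_eq_square field_simps)
  qed
  finally show ?thesis unfolding a_def b_def cosh_field_def by (simp add: power_divide)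
qed

lemma one_plus_exp_squared: "(1 + exp a)^2 = 4 * exp a * cosh (a / 2)^2" for a :: real
proof -
  have "exp a = exp (a/2) * exp (a/2)" by (simp flip: exp_add)
  then show ?thesis unfolding cosh_field_def by (simp add: exp_minus power2_eq_square field_simps)
qed

lemma norm_one_plus_exp_ge:
  assumes "sin (Im w / 2)^2 \<le> s^2 * cosh (Re w / 2)^2" and "c^2 + s^2 = 1"
  shows "\<bar>c\<bar> * (1 + exp (Re w)) \<le> norm (1 + exp w)"
proof (rule power2_le_imp_le)
  have "(\<bar>c\<bar> * (1 + exp (Re w)))^2 = (1 - s^2) * (4 * exp (Re w) * cosh (Re w / 2)^2)"
    using assms(2) by (simp add: power_mult_distrib one_plus_exp_squared)
  also have "\<dots> = 4 * exp (Re w) * (cosh (Re w / 2)^2 - s^2 * cosh (Re w / 2)^2)"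
    by (simp add: algebra_simps)
  also have "\<dots> \<le> norm (1 + exp w)^2"
    using assms(1) by (simp add: norm_one_plus_exp_squared)
  finally show "(\<bar>c\<bar> * (1 + exp (Re w)))^2 \<le> norm (1 + exp w)^2" .
qed simp

lemma norm_one_plus_exp_le_2:
  assumes "Re w \<le> 0"
  shows "norm (1 + exp w) \<le> 2"
proof -
  have "exp (Re w) \<le> 1" using assms by simp
  then show ?thesis using norm_triangle_ineq[of 1 "exp w"] unfolding norm_exp_eq_Re norm_one by linarith
qed

lemma one_plus_exp_mult_one_plus_exp:
  fixes W :: complex
  shows "(1 + exp (- (2 * W))) * (1 + exp (2 * W)) = 4 * cosh W ^ 2"
proof -
  have exp: "exp (2 * W) = exp W ^ 2" "exp (- (2 * W)) = inverse (exp W) ^ 2"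
    "exp (- W) = inverse (exp W)"
    by (simp_all add: exp_minus power_inverse flip: exp_double)
  show ?thesis unfolding cosh_field_def exp by (simp add: power2_eq_square field_simps)
qed

lemma cos_le_norm_one_plus_exp_pi_sinh:
  fixes z :: complex
  assumes "\<bar>Im z\<bar> < pi/2"
  shows "cos (pi/2 * \<bar>sin (Im z)\<bar>) \<le> norm (1 + exp (complex_of_real pi * sinh z))"
proof -
  define w where "w = complex_of_real pi * sinh z"
  define t where "t = \<bar>sin (Im z)\<bar>"
  define q where "q = pi/2 * cosh (Re z)"
  define R where "R = pi/2 * \<bar>sinh (Re z)\<bar> * cos (Im z)"
  have cos_pos: "0 < cos (Im z)" using assms by (intro cos_gt_zero_pi) auto
  have t: "0 \<le> t" "t < 1"
    using cos_pos sin_squared_eq[of "Im z"] unfolding t_def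
    by (auto simp: abs_square_less_1[symmetric])
  have q: "pi/2 \<le> q" unfolding q_def using cosh_real_ge_1[of "Re z"] by simp
  have R: "R^2 = (1 - t^2) * (q^2 - pi^2/4)"
  proof -
    have "1 - t^2 = cos (Im z)^2" unfolding t_def by (simp add: cos_squared_eq)
    moreover have "q^2 - pi^2/4 = pi^2/4 * sinh (Re z)^2"
      unfolding q_def by (simp add: power_mult_distrib power_divide cosh_square_eq algebra_simps)
    ultimately show ?thesis unfolding R_def by (simp add: power_mult_distrib power_divide)
  qed
  have "\<bar>sin (t * q)\<bar> \<le> sin (pi/2 * t) * cosh R"
    using abs_sin_le_sin_mul_cosh[OF t q R] .
  moreover have "\<bar>sin (Im w / 2)\<bar> = \<bar>sin (t * q)\<bar>"
  proof -
    have "Im w / 2 = sin (Im z) * q" unfolding w_def q_def by (simp add: Im_sinh)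
    then show ?thesis unfolding t_def by (cases "0 \<le> sin (Im z)") (simp_all add: abs_of_neg)
  qed
  moreover have "cosh (Re w / 2) = cosh R"
  proof -
    have "Re w / 2 = pi/2 * sinh (Re z) * cos (Im z)" unfolding w_def by (simp add: Re_sinh)
    then show ?thesis unfolding R_def by (cases "0 \<le> sinh (Re z)") (simp_all add: abs_of_neg)
  qed
  ultimately have "sin (Im w / 2)^2 \<le> sin (pi/2 * t)^2 * cosh (Re w / 2)^2"
    by (metis abs_ge_zero power2_abs power_mono power_mult_distrib)
  then have "\<bar>cos (pi/2 * t)\<bar> * (1 + exp (Re w)) \<le> norm (1 + exp w)"
    by (rule norm_one_plus_exp_ge) simp
  moreover have "cos (pi/2 * t) \<le> \<bar>cos (pi/2 * t)\<bar> * (1 + exp (Re w))"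
    using mult_left_mono[of 1 "1 + exp (Re w)" "\<bar>cos (pi/2 * t)\<bar>"] by simp
  ultimately show ?thesis unfolding w_def t_def by linarith
qed

lemma cos_half_pi_sin_le_norm_one_plus_exp:
  fixes \<zeta> :: complex
  assumes "d < pi/2" and "\<zeta> \<in> strip d"
  shows "cos (pi/2 * sin d) \<le> norm (1 + exp (- complex_of_real pi * sinh \<zeta>))"
    and "cos (pi/2 * sin d) \<le> norm (1 + exp (complex_of_real pi * sinh \<zeta>))"
proof -
  have y: "\<bar>Im \<zeta>\<bar> < d" using assms(2) unfolding strip_def by simp
  have "\<bar>sin (Im \<zeta>)\<bar> \<le> sin d"
  proof -
    have "\<bar>sin (Im \<zeta>)\<bar> = sin \<bar>Im \<zeta>\<bar>"
      using y assms(1) sin_ge_zero[of "Im \<zeta>"] sin_ge_zero[of "- Im \<zeta>"]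
      by (cases "0 \<le> Im \<zeta>") auto
    also have "\<dots> \<le> sin d" using y assms(1) by (subst sin_mono_le_eq) auto
    finally show ?thesis .
  qed
  moreover have "pi/2 * sin d \<le> pi"
    using mult_left_mono[OF sin_le_one[of d], of "pi/2"] pi_gt_zero by linarith
  ultimately have cos: "cos (pi/2 * sin d) \<le> cos (pi/2 * \<bar>sin (Im \<zeta>)\<bar>)"
    by (intro cos_monotone_0_pi_le) auto
  have "\<bar>Im \<zeta>\<bar> < pi/2" "\<bar>Im (- \<zeta>)\<bar> < pi/2" using y assms(1) by auto
  from this[THEN cos_le_norm_one_plus_exp_pi_sinh] cos
  show "cos (pi/2 * sin d) \<le> norm (1 + exp (- complex_of_real pi * sinh \<zeta>))"
    and "cos (pi/2 * sin d) \<le> norm (1 + exp (complex_of_real pi * sinh \<zeta>))"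
    by auto
qed

lemma norm_one_plus_exp_pi_sinh_le_2:
  fixes \<zeta> :: complex
  assumes "\<bar>Im \<zeta>\<bar> < pi/2"
  shows "Re \<zeta> \<le> 0 \<Longrightarrow> norm (1 + exp (complex_of_real pi * sinh \<zeta>)) \<le> 2"
    and "0 \<le> Re \<zeta> \<Longrightarrow> norm (1 + exp (- complex_of_real pi * sinh \<zeta>)) \<le> 2"
proof -
  define c where "c = pi * cos (Im \<zeta>)"
  have "0 < c" unfolding c_def using assms by (intro mult_pos_pos cos_gt_zero_pi) auto
  moreover have Re: "Re (complex_of_real pi * sinh \<zeta>) = c * sinh (Re \<zeta>)"
    unfolding c_def by (simp add: Re_sinh)
  ultimately show "Re \<zeta> \<le> 0 \<Longrightarrow> norm (1 + exp (complex_of_real pi * sinh \<zeta>)) \<le> 2"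
    and "0 \<le> Re \<zeta> \<Longrightarrow> norm (1 + exp (- complex_of_real pi * sinh \<zeta>)) \<le> 2"
    by (auto intro!: norm_one_plus_exp_le_2 simp: mult_nonneg_nonpos)
qed

lemma norm_one_plus_exp_pi_sinh_mult:
  "norm (1 + exp (- complex_of_real pi * sinh \<zeta>)) * norm (1 + exp (complex_of_real pi * sinh \<zeta>))
     = 4 * norm (cosh (complex_of_real (pi/2) * sinh \<zeta>))^2"
proof -
  define W where "W = complex_of_real (pi/2) * sinh \<zeta>"
  have "complex_of_real pi * sinh \<zeta> = 2 * W" unfolding W_def by simp
  then show ?thesis
    unfolding W_def[symmetric] norm_mult[symmetric] by (simp add: one_plus_exp_mult_one_plus_exp norm_mult norm_power)
qed

section \<open>The transformed function\<close>

lemma deriv_psi_DE: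
  "deriv psi_DE z = cosh (complex_of_real (pi/2) * sinh z) * (complex_of_real (pi/2) * cosh z)"
  unfolding psi_DE_def by (rule DERIV_imp_deriv) (auto intro!: derivative_eq_intros)

lemma analytic_on_DE_transform:
  assumes "f analytic_on psi_DE ` S"
  shows "(\<lambda>\<zeta>. f (psi_DE \<zeta>) * deriv psi_DE \<zeta>) analytic_on S"
proof (rule analytic_on_mult)
  have "psi_DE analytic_on S" unfolding psi_DE_def by (intro analytic_intros)
  then show "(\<lambda>\<zeta>. f (psi_DE \<zeta>)) analytic_on S"
    using analytic_on_compose[OF _ assms] by (simp add: o_def)
  show "(\<lambda>\<zeta>. deriv psi_DE \<zeta>) analytic_on S" unfolding deriv_psi_DE by (intro analytic_intros)
qed

lemma one_plus_psi_DE_squared: "1 + psi_DE z ^ 2 = cosh (complex_of_real (pi/2) * sinh z) ^ 2"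
  unfolding psi_DE_def by (simp add: cosh_square_eq)

lemma powr_weight_le:
  fixes P Q C \<alpha> \<beta> :: real
  assumes P: "0 < P" and C: "0 < C" "C \<le> 1" "C \<le> Q" "Q \<le> 2"
  shows "(P * Q / 4) powr (- \<alpha>/2) * (P powr (\<alpha>/2) * Q powr (\<beta>/2))
           \<le> 2 powr max \<alpha> \<beta> / C powr ((max \<alpha> \<beta> - min \<alpha> \<beta>)/2)"
proof -
  have Q: "0 < Q" using C by linarith
  have "(P * Q / 4) powr (- \<alpha>/2) * (P powr (\<alpha>/2) * Q powr (\<beta>/2))
      = (P powr (- \<alpha>/2) * P powr (\<alpha>/2)) * (Q powr (- \<alpha>/2) * Q powr (\<beta>/2)) * 4 powr (\<alpha>/2)"
    using P Q by (simp add: powr_mult powr_divide powr_minus_divide field_simps)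
  also have "\<dots> = 2 powr \<alpha> * Q powr ((\<beta> - \<alpha>)/2)"
  proof -
    have "(4::real) powr (\<alpha>/2) = (2 powr 2) powr (\<alpha>/2)" by simp
    then have "(4::real) powr (\<alpha>/2) = 2 powr \<alpha>" by (simp add: powr_powr)
    then show ?thesis using P Q by (simp flip: powr_add add: diff_divide_distrib)
  qed
  also have "\<dots> \<le> 2 powr max \<alpha> \<beta> / C powr ((max \<alpha> \<beta> - min \<alpha> \<beta>)/2)"
  proof (cases "\<alpha> \<le> \<beta>")
    case True
    have "2 powr \<alpha> * Q powr ((\<beta> - \<alpha>)/2) \<le> 2 powr \<alpha> * 2 powr ((\<beta> - \<alpha>)/2)"
      using True Q C by (intro mult_left_mono powr_mono2) auto
    also have "\<dots> \<le> 2 powr \<beta>" using True by (simp add: field_simps flip: powr_add)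
    also have "\<dots> \<le> 2 powr \<beta> / C powr ((\<beta> - \<alpha>)/2)"
      using C True powr_le1[of "(\<beta> - \<alpha>)/2" C] by (simp add: le_divide_eq mult_left_le)
    finally show ?thesis using True by (simp add: max_def min_def)
  next
    case False
    have "Q powr ((\<beta> - \<alpha>)/2) \<le> C powr ((\<beta> - \<alpha>)/2)" using False C by (intro powr_mono2') auto
    also have "\<dots> = 1 / C powr ((\<alpha> - \<beta>)/2)"
      using powr_minus_divide[of C "(\<alpha> - \<beta>)/2"] by (simp add: minus_divide_left)
    finally have "2 powr \<alpha> * Q powr ((\<beta> - \<alpha>)/2) \<le> 2 powr \<alpha> * (1 / C powr ((\<alpha> - \<beta>)/2))"
      by (rule mult_left_mono) simp
    then show ?thesis using False by (simp add: max_def min_def)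
  qed
  finally show ?thesis .
qed

lemma mult_le_of_le_powr_weight:
  fixes y h K \<gamma> P Q w M :: real
  assumes h: "0 < h" and y: "0 \<le> y" "y \<le> K * (h^2) powr (-(\<gamma>+1)/2)"
    and PQ: "P * Q / 4 = h^2" and w: "0 \<le> w" "(P * Q / 4) powr (-\<gamma>/2) * w \<le> M"
  shows "y * h * w \<le> K * M"
proof -
  have "0 \<le> K"
  proof (rule ccontr)
    assume "\<not> 0 \<le> K"
    then have "K * (h^2) powr (-(\<gamma>+1)/2) < 0" using h by (simp add: mult_neg_pos)
    then show False using y by linarith
  qed
  have "y * h \<le> K * (h^2) powr (-(\<gamma>+1)/2) * (h^2) powr (1/2)"
    using y h by (simp add: square_powr_half mult_right_mono)
  also have "\<dots> = K * (P * Q / 4) powr (-\<gamma>/2)"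
  proof -
    have "-(\<gamma>+1)/2 + 1/2 = -\<gamma>/2" by (simp add: field_simps)
    then show ?thesis unfolding PQ mult.assoc powr_add[symmetric] by simp
  qed
  finally have "y * h * w \<le> K * (P * Q / 4) powr (-\<gamma>/2) * w"
    using w(1) by (rule mult_right_mono)
  also have "\<dots> \<le> K * M" using w \<open>0 \<le> K\<close> by (simp add: mult.assoc mult_left_mono)
  finally show ?thesis .
qed

lemma norm_DE_transform_le:
  fixes f :: "complex \<Rightarrow> complex" and d K \<alpha> \<beta> C :: real and \<zeta> :: complex
  assumes d: "d < pi/2" and \<zeta>: "\<zeta> \<in> strip d"
    and left: "\<forall>z\<in>psi_DE ` strip_minus d. norm (f z) \<le> K * norm (1 + z^2) powr (-(\<alpha>+1)/2)"
    and right: "\<forall>z\<in>psi_DE ` strip_plus d. norm (f z) \<le> K * norm (1 + z^2) powr (-(\<beta>+1)/2)"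
    and C: "0 < C" "C \<le> 1" "C \<le> norm (1 + exp (- complex_of_real pi * sinh \<zeta>))"
      "C \<le> norm (1 + exp (complex_of_real pi * sinh \<zeta>))"
  shows "norm (f (psi_DE \<zeta>) * deriv psi_DE \<zeta>)
    \<le> (pi/2) * (2 powr max \<alpha> \<beta> * K / C powr ((max \<alpha> \<beta> - min \<alpha> \<beta>)/2)) * norm (cosh \<zeta>) /
      (norm (1 + exp (- complex_of_real pi * sinh \<zeta>)) powr (\<alpha>/2) *
       norm (1 + exp (complex_of_real pi * sinh \<zeta>)) powr (\<beta>/2))"
proof -
  define h where "h = norm (cosh (complex_of_real (pi/2) * sinh \<zeta>))"
  define P where "P = norm (1 + exp (- complex_of_real pi * sinh \<zeta>))"
  define Q where "Q = norm (1 + exp (complex_of_real pi * sinh \<zeta>))"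
  define M where "M = 2 powr max \<alpha> \<beta> / C powr ((max \<alpha> \<beta> - min \<alpha> \<beta>)/2)"
  have P: "0 < P" and Q: "0 < Q" using C unfolding P_def Q_def by linarith+
  have PQ: "P * Q / 4 = h^2" unfolding P_def Q_def h_def norm_one_plus_exp_pi_sinh_mult by simp
  then have h: "0 < h" using P Q unfolding h_def by (metis norm_ge_zero order_less_le
      zero_less_divide_iff zero_less_mult_iff zero_less_numeral power_zero_numeral)
  have norm_psi: "norm (1 + psi_DE \<zeta> ^ 2) = h^2"
    unfolding one_plus_psi_DE_squared h_def by (simp add: norm_power)
  have Im: "\<bar>Im \<zeta>\<bar> < pi/2" using \<zeta> d unfolding strip_def by simp
  \<comment> \<open>\<gamma> is \<alpha> on the left half-strip and \<beta> on the right one.\<close>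
  obtain \<gamma> where f_le: "norm (f (psi_DE \<zeta>)) \<le> K * (h^2) powr (-(\<gamma>+1)/2)"
    and weight: "(P * Q / 4) powr (-\<gamma>/2) * (P powr (\<alpha>/2) * Q powr (\<beta>/2)) \<le> M"
  proof (cases "Re \<zeta> < 0")
    case True
    then have "psi_DE \<zeta> \<in> psi_DE ` strip_minus d" using \<zeta> unfolding strip_minus_def by auto
    moreover have "Q \<le> 2" unfolding Q_def using True Im by (intro norm_one_plus_exp_pi_sinh_le_2) auto
    ultimately show thesis
      using that left norm_psi powr_weight_le[OF P C(1,2)] C(4) unfolding M_def Q_def by auto
  next
    case False
    then have "psi_DE \<zeta> \<in> psi_DE ` strip_plus d" using \<zeta> unfolding strip_plus_def by auto
    moreover have "P \<le> 2" unfolding P_def using False Im by (intro norm_one_plus_exp_pi_sinh_le_2) auto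
    moreover have "(P * Q / 4) powr (-\<beta>/2) * (P powr (\<alpha>/2) * Q powr (\<beta>/2)) \<le> M"
      using powr_weight_le[OF Q C(1,2), of P \<beta> \<alpha>] C(3) \<open>P \<le> 2\<close> unfolding M_def P_def
      by (simp add: max.commute min.commute mult.commute)
    ultimately show thesis using that right norm_psi by auto
  qed
  have "norm (f (psi_DE \<zeta>) * deriv psi_DE \<zeta>) * (P powr (\<alpha>/2) * Q powr (\<beta>/2))
      = norm (f (psi_DE \<zeta>)) * h * (P powr (\<alpha>/2) * Q powr (\<beta>/2)) * (pi/2 * norm (cosh \<zeta>))"
    unfolding deriv_psi_DE h_def by (simp add: norm_mult mult_ac)
  also have "\<dots> \<le> K * M * (pi/2 * norm (cosh \<zeta>))"
    using mult_le_of_le_powr_weight[OF h _ f_le PQ _ weight] by (intro mult_right_mono) simp_all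
  finally have "norm (f (psi_DE \<zeta>) * deriv psi_DE \<zeta>) * (P powr (\<alpha>/2) * Q powr (\<beta>/2))
      \<le> pi/2 * (M * K) * norm (cosh \<zeta>)"
    by (simp only: mult_ac)
  moreover have "0 < P powr (\<alpha>/2) * Q powr (\<beta>/2)" using P Q by simp
  moreover have "2 powr max \<alpha> \<beta> * K / C powr ((max \<alpha> \<beta> - min \<alpha> \<beta>)/2) = M * K"
    unfolding M_def by simp
  ultimately show ?thesis
    unfolding P_def[symmetric] Q_def[symmetric] by (simp add: pos_le_divide_eq)
qed

lemma sinh_of_real: "sinh (complex_of_real x) = complex_of_real (sinh x)"
  by (simp add: sinh_field_def flip: exp_of_real)

lemma cosh_of_real: "cosh (complex_of_real x) = complex_of_real (cosh x)"
  by (simp add: cosh_field_def flip: exp_of_real)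

lemma norm_one_plus_exp_of_real: "norm (1 + exp (complex_of_real x)) = 1 + exp x"
proof -
  have "1 + exp (complex_of_real x) = complex_of_real (1 + exp x)" by (simp flip: exp_of_real)
  then show ?thesis by (simp only: norm_of_real) (simp add: add_pos_pos)
qed

theorem lemma9:
  fixes f :: "complex \<Rightarrow> complex" and d K \<alpha> \<beta> :: real
  assumes "0 < d" and "d < pi/2"
    and "f analytic_on (psi_DE ` strip d)"
    and "0 < K" and "0 < \<alpha>" and "0 < \<beta>"
    and "\<forall>z\<in>psi_DE ` strip_minus d. norm (f z) \<le> K * norm (1 + z^2) powr (-(\<alpha>+1)/2)"
    and "\<forall>z\<in>psi_DE ` strip_plus d. norm (f z) \<le> K * norm (1 + z^2) powr (-(\<beta>+1)/2)"
  shows "(\<lambda>\<zeta>. f (psi_DE \<zeta>) * deriv psi_DE \<zeta>) \<in>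
    LDE_class (2 powr (max \<alpha> \<beta>) * K / (cos (pi/2 * sin d)) powr ((max \<alpha> \<beta> - min \<alpha> \<beta>)/2))
              (2 powr (max \<alpha> \<beta>) * K) \<alpha> \<beta> d"
proof -
  note bound = norm_DE_transform_le[OF assms(2) _ assms(7,8)]
  have C: "0 < cos (pi/2 * sin d)"
  proof -
    have "0 < sin d" "sin d < 1" using sin_mono_less_eq[of d "pi/2"] assms(1,2) by (auto intro: sin_gt_zero)
    then have "0 < pi/2 * sin d" "pi/2 * sin d < pi/2" by simp_all
    then show ?thesis by (intro cos_gt_zero_pi) linarith+
  qed
  have "(\<lambda>\<zeta>. f (psi_DE \<zeta>) * deriv psi_DE \<zeta>) analytic_on strip d"
    using assms(3) by (rule analytic_on_DE_transform)
  moreover have "\<forall>\<zeta>\<in>strip d. norm (f (psi_DE \<zeta>) * deriv psi_DE \<zeta>) \<le>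
      (pi/2) * (2 powr (max \<alpha> \<beta>) * K / (cos (pi/2 * sin d)) powr ((max \<alpha> \<beta> - min \<alpha> \<beta>)/2)) *
      norm (cosh \<zeta>) / (norm (1 + exp (- complex_of_real pi * sinh \<zeta>)) powr (\<alpha>/2) *
       norm (1 + exp (complex_of_real pi * sinh \<zeta>)) powr (\<beta>/2))"
    using bound C cos_half_pi_sin_le_norm_one_plus_exp[OF assms(2)] by simp
  moreover have "norm (f (psi_DE x) * deriv psi_DE x) \<le> (pi/2) * (2 powr (max \<alpha> \<beta>) * K) * cosh x /
      ((1 + exp (- pi * sinh x)) powr (\<alpha>/2) * (1 + exp (pi * sinh x)) powr (\<beta>/2))" for x :: real
  proof -
    have "complex_of_real x \<in> strip d" using assms(1) unfolding strip_def by simp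
    from bound[OF this, of 1]
    show ?thesis by (simp add: sinh_of_real cosh_of_real norm_one_plus_exp_of_real flip: of_real_mult of_real_minus)
  qed
  ultimately show ?thesis unfolding LDE_class_def by blast
qed

end
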